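(* Let $\lambda_1\ge\lambda_2\ge\cdots\ge\lambda_p>0$ and define the norm $\Omega(\beta):=\sum_{i=1}^p\lambda_i|\beta|_{(i)}$ on $\mathbb{R}^p$, where $|\beta|_{(1)}\ge\cdots\ge|\beta|_{(p)}$ are the absolute values of the entries of $\beta$ in decreasing order. Let $S\subseteq\{1,\dots,p\}$, $s=|S|$, $r=p-s$, and define on $\mathbb{R}^{r}$ (indexed by $S^c$) $$\Omega^{S^c}(\beta_{S^c}):=\sum_{l=1}^r\lambda_{p-r+l}|\beta|_{(l,S^c)},$$ where $|\beta|_{(1,S^c)}\ge\cdots\ge|\beta|_{(r,S^c)}$ are the absolute values of the entries of $\beta_{S^c}$ in decreasing order. Then $\Omega(\beta)\ge\Omega(\beta_S)+\Omega^{S^c}(\beta_{S^c})$ for all $\beta\in\mathbb{R}^p$. Moreover, $\Omega^{S^c}$ is the strongest such norm: for every norm $\underline\Omega^{S^c}$ on $\mathbb{R}^{r}$ satisfying $\Omega(\beta)\ge\Omega(\beta_S)+\underline\Omega^{S^c}(\beta_{S^c})$ for all $\beta\in\mathbb{R}^p$, one has $\underline\Omega^{S^c}(v)\le\Omega^{S^c}(v)$ for all $v\in\mathbb{R}^r$.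
   Context: $\beta_S$ denotes the vector in $\mathbb{R}^p$ agreeing with $\beta$ on $S$ and equal to $0$ off $S$ (when $\Omega$ is applied), and $\beta_{S^c}=(\beta_j)_{j\in S^c}\in\mathbb{R}^{r}$. *)

theory Defs
  imports Complex_Main
begin

text \<open>Vectors of R^p are modelled as functions nat => real, coordinates 0..p-1.
  A vector indexed by a finite index set I (e.g. S^c) is a function vanishing off I.\<close>

definition dec_abs :: "(nat \<Rightarrow> real) \<Rightarrow> nat set \<Rightarrow> real list" where
  "dec_abs b I = rev (sort (map (\<lambda>i. \<bar>b i\<bar>) (sorted_list_of_set I)))"

text \<open>Sorted-L1 norm: Omega(b) = sum_{i<p} lam i * |b|_(i+1)  (0-based lam).\<close>
definition slope :: "nat \<Rightarrow> (nat \<Rightarrow> real) \<Rightarrow> (nat \<Rightarrow> real) \<Rightarrow> real" where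
  "slope p lam b = (\<Sum>i<p. lam i * dec_abs b {..<p} ! i)"

definition slope_comp :: "nat \<Rightarrow> (nat \<Rightarrow> real) \<Rightarrow> nat set \<Rightarrow> (nat \<Rightarrow> real) \<Rightarrow> real" where
  "slope_comp p lam S b =
     (let Sc = {..<p} - S; r = card Sc in (\<Sum>l<r. lam (p - r + l) * dec_abs b Sc ! l))"

definition restr :: "(nat \<Rightarrow> real) \<Rightarrow> nat set \<Rightarrow> nat \<Rightarrow> real" where
  "restr b I = (\<lambda>i. if i \<in> I then b i else 0)"

definition is_norm_on :: "nat set \<Rightarrow> ((nat \<Rightarrow> real) \<Rightarrow> real) \<Rightarrow> bool" where
  "is_norm_on I N \<longleftrightarrow>
     (\<forall>v. (\<forall>i. i \<notin> I \<longrightarrow> v i = 0) \<longrightarrow> N v \<ge> 0 \<and> (N v = 0 \<longleftrightarrow> v = (\<lambda>_. 0))) \<and>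
     (\<forall>v c. (\<forall>i. i \<notin> I \<longrightarrow> v i = 0) \<longrightarrow> N (\<lambda>i. c * v i) = \<bar>c\<bar> * N v) \<and>
     (\<forall>v w. (\<forall>i. i \<notin> I \<longrightarrow> v i = 0) \<longrightarrow> (\<forall>i. i \<notin> I \<longrightarrow> w i = 0) \<longrightarrow>
        N (\<lambda>i. v i + w i) \<le> N v + N w)"

end

theory Submission
  imports Defs "HOL-Library.Multiset"
begin

text \<open>Listing the sorted absolute entries of \<open>b\<close> on \<open>S\<close> first and those on the complement
  after them rearranges the sorted entries of \<open>b\<close>; weighting this list by \<open>\<lambda>\<close> gives exactly
  \<open>\<Omega>(b\<^sub>S) + \<Omega>\<^sup>S\<^sup>c(b\<^sub>S\<^sub>c)\<close>, which the rearrangement inequality bounds by \<open>\<Omega>(b)\<close>.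
  When every entry on \<open>S\<close> dominates every entry off \<open>S\<close> the rearrangement is the sorted order
  itself and equality holds. Putting a large constant on \<open>S\<close> next to a given \<open>v\<close> off \<open>S\<close> therefore
  forces every admissible lower norm to lie below \<open>\<Omega>\<^sup>S\<^sup>c\<close>.\<close>

fun weighted_sum :: "(nat \<Rightarrow> real) \<Rightarrow> real list \<Rightarrow> real" where
  "weighted_sum w [] = 0"
| "weighted_sum w (x # xs) = w 0 * x + weighted_sum (\<lambda>i. w (Suc i)) xs"

lemma weighted_sum_conv_sum: "weighted_sum w xs = (\<Sum>i<length xs. w i * xs ! i)"
  by (induction xs arbitrary: w) (simp_all del: sum.lessThan_Suc add: sum.lessThan_Suc_shift)

lemma weighted_sum_append:
  "weighted_sum w (xs @ ys) = weighted_sum w xs + weighted_sum (\<lambda>i. w (length xs + i)) ys"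
  by (induction xs arbitrary: w) simp_all

lemma weighted_sum_replicate_0: "weighted_sum w (replicate n 0) = 0"
  by (induction n arbitrary: w) simp_all

definition nonincreasing_upto :: "(nat \<Rightarrow> real) \<Rightarrow> nat \<Rightarrow> bool" where
  "nonincreasing_upto w n \<longleftrightarrow> (\<forall>i j. i \<le> j \<longrightarrow> j < n \<longrightarrow> w j \<le> w i)"

lemma nonincreasing_upto_shift:
  "nonincreasing_upto w (Suc n) \<Longrightarrow> nonincreasing_upto (\<lambda>i. w (Suc i)) n"
  unfolding nonincreasing_upto_def by auto

lemma nonincreasing_upto_mono:
  "nonincreasing_upto w n \<Longrightarrow> m \<le> n \<Longrightarrow> nonincreasing_upto w m"
  unfolding nonincreasing_upto_def by auto

lemma weighted_sum_snoc_le_Cons: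
  assumes "nonincreasing_upto w (Suc (length xs))" "\<forall>x\<in>set xs. x \<le> z"
  shows "weighted_sum w (xs @ [z]) \<le> weighted_sum w (z # xs)"
  using assms
proof (induction xs arbitrary: w)
  case Nil
  then show ?case by simp
next
  case (Cons x xs)
  have IH: "weighted_sum (\<lambda>i. w (Suc i)) (xs @ [z]) \<le> weighted_sum (\<lambda>i. w (Suc i)) (z # xs)"
    using Cons.IH[OF nonincreasing_upto_shift] Cons.prems by simp
  have "w 1 \<le> w 0" "x \<le> z"
    using Cons.prems unfolding nonincreasing_upto_def by auto
  then have "w 0 * x + w 1 * z \<le> w 0 * z + w 1 * x"
    by (smt (verit) mult_right_mono right_diff_distrib left_diff_distrib)
  with IH show ?case by simp
qed

lemma weighted_sum_le_sorted:
  assumes "sorted_wrt (\<ge>) zs" "mset ys = mset zs" "nonincreasing_upto w (length zs)"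
  shows "weighted_sum w ys \<le> weighted_sum w zs"
  using assms
proof (induction zs arbitrary: ys w)
  case Nil
  then show ?case by simp
next
  case (Cons z zs)
  have "z \<in> set ys" using Cons.prems(2) by (metis list.set_intros(1) set_mset_mset)
  then obtain xs ys' where ys: "ys = xs @ z # ys'" by (meson split_list)
  have mset_rest: "mset (xs @ ys') = mset zs" using Cons.prems(2) ys by simp
  have "set xs \<subseteq> set (z # zs)" using Cons.prems(2) ys
    by (metis Un_iff set_append set_mset_mset subsetI)
  then have xs_le: "\<forall>x\<in>set xs. x \<le> z" using Cons.prems(1) by auto
  have "length xs \<le> length zs" using mset_rest by (metis length_append le_add1 size_mset)
  then have w_xs: "nonincreasing_upto w (Suc (length xs))"
    using Cons.prems(3) nonincreasing_upto_mono by simp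
  have "weighted_sum w ys
      = weighted_sum w (xs @ [z]) + weighted_sum (\<lambda>i. w (Suc (length xs) + i)) ys'"
    using ys weighted_sum_append[of w "xs @ [z]" ys'] by simp
  also have "\<dots> \<le> weighted_sum w (z # xs) + weighted_sum (\<lambda>i. w (Suc (length xs) + i)) ys'"
    using weighted_sum_snoc_le_Cons[OF w_xs xs_le] by simp
  also have "\<dots> = w 0 * z + weighted_sum (\<lambda>i. w (Suc i)) (xs @ ys')"
    using weighted_sum_append[of "\<lambda>i. w (Suc i)" xs ys'] by simp
  also have "\<dots> \<le> w 0 * z + weighted_sum (\<lambda>i. w (Suc i)) zs"
    using Cons.IH[OF _ mset_rest nonincreasing_upto_shift] Cons.prems(1,3) by simp
  finally show ?case by simp
qed

lemma mset_dec_abs: "finite I \<Longrightarrow> mset (dec_abs b I) = image_mset (\<lambda>i. \<bar>b i\<bar>) (mset_set I)"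
  unfolding dec_abs_def by (metis mset_map mset_rev mset_sort mset_sorted_list_of_multiset
      sorted_list_of_mset_set)

lemma set_dec_abs: "finite I \<Longrightarrow> set (dec_abs b I) = (\<lambda>i. \<bar>b i\<bar>) ` I"
  unfolding dec_abs_def by simp

lemma sorted_dec_abs: "sorted_wrt (\<ge>) (dec_abs b I)"
  unfolding dec_abs_def by (simp add: sorted_wrt_rev)

lemma length_dec_abs: "finite I \<Longrightarrow> length (dec_abs b I) = card I"
  unfolding dec_abs_def by simp

lemma dec_abs_cong: "(\<And>i. i \<in> I \<Longrightarrow> b i = c i) \<Longrightarrow> dec_abs b I = dec_abs c I"
proof -
  assume "\<And>i. i \<in> I \<Longrightarrow> b i = c i"
  then have "map (\<lambda>i. \<bar>b i\<bar>) (sorted_list_of_set I) = map (\<lambda>i. \<bar>c i\<bar>) (sorted_list_of_set I)"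
    by (cases "finite I") auto
  then show ?thesis unfolding dec_abs_def by (simp only:)
qed

lemma dec_abs_const:
  assumes "\<And>i. i \<in> I \<Longrightarrow> \<bar>b i\<bar> = c"
  shows "dec_abs b I = replicate (card I) c"
proof -
  have "map (\<lambda>i. \<bar>b i\<bar>) (sorted_list_of_set I) = replicate (card I) c"
    using assms by (cases "finite I") (auto simp: map_replicate_const intro!: replicate_eqI)
  then show ?thesis unfolding dec_abs_def by simp
qed

lemma mset_dec_abs_Un:
  assumes "finite A" "finite B" "A \<inter> B = {}"
  shows "mset (dec_abs b (A \<union> B)) = mset (dec_abs b A) + mset (dec_abs b B)"
  using assms by (simp add: mset_dec_abs mset_set_Union)

lemma dec_abs_Un:
  assumes "finite A" "finite B" "A \<inter> B = {}"
    and dominates: "\<And>i j. i \<in> A \<Longrightarrow> j \<in> B \<Longrightarrow> \<bar>b j\<bar> \<le> \<bar>b i\<bar>"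
  shows "dec_abs b (A \<union> B) = dec_abs b A @ dec_abs b B"
proof -
  have "sort (map (\<lambda>i. \<bar>b i\<bar>) (sorted_list_of_set (A \<union> B)))
      = rev (dec_abs b B) @ rev (dec_abs b A)"
  proof (rule properties_for_sort)
    show "mset (rev (dec_abs b B) @ rev (dec_abs b A))
        = mset (map (\<lambda>i. \<bar>b i\<bar>) (sorted_list_of_set (A \<union> B)))"
      using mset_dec_abs_Un[OF assms(1-3), of b] by (simp add: dec_abs_def)
    show "sorted (rev (dec_abs b B) @ rev (dec_abs b A))"
      using sorted_dec_abs[of b A] sorted_dec_abs[of b B] dominates assms(1,2)
      by (auto simp: sorted_append sorted_wrt_rev set_dec_abs)
  qed
  then show ?thesis unfolding dec_abs_def[of b "A \<union> B"] by simp
qed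

lemma slope_eq_weighted_sum: "slope p lam b = weighted_sum lam (dec_abs b {..<p})"
  unfolding slope_def weighted_sum_conv_sum by (simp add: length_dec_abs)

lemma slope_restr:
  assumes "S \<subseteq> {..<p}"
  shows "slope p lam (restr b S) = weighted_sum lam (dec_abs b S)"
proof -
  have finite: "finite S" using assms finite_subset by blast
  have "{..<p} = S \<union> ({..<p} - S)" using assms by auto
  then have "dec_abs (restr b S) {..<p} = dec_abs (restr b S) S @ dec_abs (restr b S) ({..<p} - S)"
    using dec_abs_Un[of S "{..<p} - S" "restr b S"] finite by (simp add: restr_def)
  also have "\<dots> = dec_abs b S @ replicate (card ({..<p} - S)) 0"
    using dec_abs_cong[of S "restr b S" b] dec_abs_const[of "{..<p} - S" "restr b S" 0]
    by (simp add: restr_def)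
  finally show ?thesis
    by (simp add: slope_eq_weighted_sum weighted_sum_append weighted_sum_replicate_0)
qed

lemma slope_comp_restr:
  assumes "S \<subseteq> {..<p}"
  shows "slope_comp p lam S (restr b ({..<p} - S))
       = weighted_sum (\<lambda>l. lam (card S + l)) (dec_abs b ({..<p} - S))"
proof -
  have "p - card ({..<p} - S) = card S"
    using card_mono[OF _ assms] by (simp add: card_Diff_subset finite_subset[OF assms] assms)
  then show ?thesis
    unfolding slope_comp_def Let_def weighted_sum_conv_sum
    using dec_abs_cong[of "{..<p} - S" "restr b ({..<p} - S)" b]
    by (simp add: length_dec_abs restr_def)
qed

lemma weighted_sum_split_eq_restr:
  assumes "S \<subseteq> {..<p}"
  shows "weighted_sum lam (dec_abs b S @ dec_abs b ({..<p} - S))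
       = slope p lam (restr b S) + slope_comp p lam S (restr b ({..<p} - S))"
  using assms finite_subset[OF assms]
  by (simp add: weighted_sum_append slope_restr slope_comp_restr length_dec_abs)

lemma slope_ge_restr_add_slope_comp:
  assumes "nonincreasing_upto lam p" "S \<subseteq> {..<p}"
  shows "slope p lam (restr b S) + slope_comp p lam S (restr b ({..<p} - S)) \<le> slope p lam b"
proof -
  have "{..<p} = S \<union> ({..<p} - S)" using assms(2) by auto
  then have "mset (dec_abs b S @ dec_abs b ({..<p} - S)) = mset (dec_abs b {..<p})"
    using mset_dec_abs_Un[of S "{..<p} - S" b] finite_subset[OF assms(2)] by simp
  then have "weighted_sum lam (dec_abs b S @ dec_abs b ({..<p} - S)) \<le> slope p lam b"
    unfolding slope_eq_weighted_sum
    by (rule weighted_sum_le_sorted[OF sorted_dec_abs]) (simp add: length_dec_abs assms(1))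
  then show ?thesis using weighted_sum_split_eq_restr[OF assms(2)] by simp
qed

lemma slope_eq_restr_add_slope_comp:
  assumes "S \<subseteq> {..<p}"
    and dominates: "\<And>i j. i \<in> S \<Longrightarrow> j \<in> {..<p} - S \<Longrightarrow> \<bar>b j\<bar> \<le> \<bar>b i\<bar>"
  shows "slope p lam b = slope p lam (restr b S) + slope_comp p lam S (restr b ({..<p} - S))"
proof -
  have "{..<p} = S \<union> ({..<p} - S)" using assms(1) by auto
  then have "dec_abs b {..<p} = dec_abs b S @ dec_abs b ({..<p} - S)"
    using dec_abs_Un[of S "{..<p} - S" b] finite_subset[OF assms(1)] dominates by simp
  then show ?thesis
    using weighted_sum_split_eq_restr[OF assms(1)] by (simp add: slope_eq_weighted_sum)
qed

lemma bound_by_slope_comp: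
  assumes S: "S \<subseteq> {..<p}"
    and split: "\<And>b. slope p lam (restr b S) + N (restr b ({..<p} - S)) \<le> slope p lam b"
    and v: "\<And>i. i \<notin> {..<p} - S \<Longrightarrow> v i = 0"
  shows "N v \<le> slope_comp p lam S v"
proof -
  define M where "M = (\<Sum>i<p. \<bar>v i\<bar>)"
  define b where "b = (\<lambda>i. if i \<in> S then M else v i)"
  have "\<bar>v j\<bar> \<le> M" if "j \<in> {..<p} - S" for j
    unfolding M_def using that by (intro member_le_sum) auto
  moreover have "M \<ge> 0" unfolding M_def by (simp add: sum_nonneg)
  ultimately have "slope p lam b = slope p lam (restr b S) + slope_comp p lam S (restr b ({..<p} - S))"
    by (intro slope_eq_restr_add_slope_comp[OF S]) (auto simp: b_def)
  moreover have "restr b ({..<p} - S) = v"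
    using v by (auto simp: restr_def b_def)
  ultimately show ?thesis using split[of b] by simp
qed

theorem lemma6:
  fixes p :: nat and lam :: "nat \<Rightarrow> real" and S :: "nat set"
  assumes mono: "\<And>i j. i \<le> j \<Longrightarrow> j < p \<Longrightarrow> lam j \<le> lam i"
    and pos: "\<And>i. i < p \<Longrightarrow> lam i > 0"
    and S: "S \<subseteq> {..<p}"
  shows "(\<forall>b. slope p lam b \<ge> slope p lam (restr b S) + slope_comp p lam S (restr b ({..<p} - S)))
    \<and> (\<forall>N. is_norm_on ({..<p} - S) N \<and>
            (\<forall>b. slope p lam b \<ge> slope p lam (restr b S) + N (restr b ({..<p} - S)))
          \<longrightarrow> (\<forall>v. (\<forall>i. i \<notin> {..<p} - S \<longrightarrow> v i = 0) \<longrightarrow> N v \<le> slope_comp p lam S v))"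
proof -
  have "nonincreasing_upto lam p"
    using mono unfolding nonincreasing_upto_def by blast
  then show ?thesis
    using slope_ge_restr_add_slope_comp[OF _ S] bound_by_slope_comp[OF S] by blast
qed

end
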